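(* Let $I$ be a nonempty open real interval, let $\varphi:I\to\mathbb{R}$ be a strictly monotone function, let $f:I\to\mathbb{R}$ be an arbitrary function, and let $t\in\,]0,1[\,$. Assume that \[ \big(tf(x)+(1-t)f(y)\big)\varphi(tx+(1-t)y)=tf(x)\varphi(x)+(1-t)f(y)\varphi(y) \qquad\text{for all } x,y\in I. \] Then either $f$ is identically zero on $I$, or $f$ is nowhere zero on $I$, $f$ and $\varphi$ are infinitely many times differentiable on $I$, and there exists a nonzero constant $\gamma\in\mathbb{R}$ such that $f^2\varphi'=\gamma$ on $I$. *)

theory Defs
  imports "HOL-Analysis.Analysis"
begin

definition C_infinity_on :: "real set \<Rightarrow> (real \<Rightarrow> real) \<Rightarrow> bool" where
  "C_infinity_on I f \<longleftrightarrow> (\<forall>n. \<forall>x\<in>I. ((deriv ^^ n) f) differentiable (at x))"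

end

(*
  If f vanishes at one point, the equation forces it to vanish everywhere; otherwise f has
  constant sign, and after rescaling f and phi by signs, f > 0 and phi is strictly increasing.
  The equation then says that phi at m = t x + (1 - t) y is the mean of phi x and phi y with
  weights t f x and (1 - t) f y. Solved for f y, it expresses f through phi, so f inherits the
  one-sided limits and each degree of smoothness of phi. Letting pairs (x, y) leave a fixed
  pair in two ways, so that m approaches a point once from the right and once from the left,
  shows that phi is continuous. Integrating the equation over the pairs x = m - (1 - t) h,
  y = m + t h with 0 <= h <= r writes phi m as a quotient of combinations of primitives of f
  and f phi, so phi is one derivative smoother than f, and bootstrapping gives C-infinity.
  Differentiating the equation twice in y at y = x gives 2 f' phi' + f phi'' = 0, that is
  (f^2 phi')' = 0.
*)
theory Submission
  imports Defs
begin

fun Ck_on :: "nat \<Rightarrow> real set \<Rightarrow> (real \<Rightarrow> real) \<Rightarrow> bool" where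
  "Ck_on 0 S g \<longleftrightarrow> continuous_on S g"
| "Ck_on (Suc k) S g \<longleftrightarrow> (\<forall>x\<in>S. g differentiable (at x)) \<and> Ck_on k S (deriv g)"

lemma Ck_on_transform:
  assumes "open S" "Ck_on k S g" "\<And>x. x \<in> S \<Longrightarrow> g x = h x"
  shows "Ck_on k S h"
  using assms(2,3)
proof (induction k arbitrary: g h)
  case 0
  then show ?case by (simp add: continuous_on_eq)
next
  case (Suc k)
  have D: "(h has_real_derivative deriv g x) (at x)" if "x \<in> S" for x
  proof (rule has_field_derivative_transform_within_open[OF _ assms(1) that])
    show "(g has_real_derivative deriv g x) (at x)"
      using Suc.prems(1) that DERIV_deriv_iff_real_differentiable by simp
    show "g y = h y" if "y \<in> S" for y
      using Suc.prems(2) that .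
  qed
  then have "deriv g x = deriv h x" if "x \<in> S" for x
    using DERIV_imp_deriv[OF D[OF that]] by simp
  with Suc.prems have "Ck_on k S (deriv h)"
    using Suc.IH[of "deriv g" "deriv h"] by simp
  with D show ?case by (auto simp: real_differentiable_def)
qed

lemma Ck_on_SucI:
  assumes "open S" "\<And>x. x \<in> S \<Longrightarrow> (g has_real_derivative g' x) (at x)" "Ck_on k S g'"
  shows "Ck_on (Suc k) S g"
proof -
  have "Ck_on k S (deriv g)"
    by (rule Ck_on_transform[OF assms(1,3)]) (metis assms(2) DERIV_imp_deriv)
  with assms(2) show ?thesis by (auto simp: real_differentiable_def)
qed

lemma Ck_on_imp_DERIV: "Ck_on (Suc k) S g \<Longrightarrow> x \<in> S \<Longrightarrow> (g has_real_derivative deriv g x) (at x)"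
  using DERIV_deriv_iff_real_differentiable by auto

lemma Ck_on_SucD: "Ck_on (Suc k) S g \<Longrightarrow> Ck_on k S g"
proof (induction k arbitrary: g)
  case 0
  then show ?case
    by (auto intro!: continuous_at_imp_continuous_on differentiable_imp_continuous_within)
qed simp

lemma Ck_on_le: "Ck_on k S g \<Longrightarrow> j \<le> k \<Longrightarrow> Ck_on j S g"
  by (induction k) (auto dest: Ck_on_SucD simp del: Ck_on.simps simp: le_Suc_eq)

lemma Ck_on_imp_continuous_on: "Ck_on k S g \<Longrightarrow> continuous_on S g"
  using Ck_on_le[of k S g 0] by simp

lemma Ck_on_subset: "Ck_on k S g \<Longrightarrow> T \<subseteq> S \<Longrightarrow> Ck_on k T g"
  by (induction k arbitrary: g) (auto intro: continuous_on_subset)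

lemma Ck_on_const: "Ck_on k S (\<lambda>x. c)"
proof (induction k arbitrary: c)
  case (Suc k)
  then show ?case using Suc.IH[of 0] by simp
qed simp

lemma Ck_on_add:
  assumes "open S" "Ck_on k S g" "Ck_on k S h" shows "Ck_on k S (\<lambda>x. g x + h x)"
  using assms(2,3)
proof (induction k arbitrary: g h)
  case (Suc k)
  show ?case
  proof (rule Ck_on_SucI[OF assms(1)])
    show "((\<lambda>x. g x + h x) has_real_derivative deriv g x + deriv h x) (at x)" if "x \<in> S" for x
      using Suc.prems that by (intro DERIV_add Ck_on_imp_DERIV)
    show "Ck_on k S (\<lambda>x. deriv g x + deriv h x)"
      using Suc by simp
  qed
qed (simp add: continuous_on_add)

lemma Ck_on_mult:
  assumes "open S" "Ck_on k S g" "Ck_on k S h" shows "Ck_on k S (\<lambda>x. g x * h x)"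
  using assms(2,3)
proof (induction k arbitrary: g h)
  case (Suc k)
  show ?case
  proof (rule Ck_on_SucI[OF assms(1)])
    show "((\<lambda>x. g x * h x) has_real_derivative g x * deriv h x + deriv g x * h x) (at x)"
      if "x \<in> S" for x
      using Suc.prems that by (intro DERIV_mult' Ck_on_imp_DERIV)
    show "Ck_on k S (\<lambda>x. g x * deriv h x + deriv g x * h x)"
      using Suc Ck_on_SucD by (intro Ck_on_add[OF assms(1)]) simp_all
  qed
qed (simp add: continuous_on_mult)

lemma Ck_on_cmult: "open S \<Longrightarrow> Ck_on k S g \<Longrightarrow> Ck_on k S (\<lambda>x. c * g x)"
  using Ck_on_mult[OF _ Ck_on_const] by blast

lemma Ck_on_cmult_iff:
  assumes "open S" "c \<noteq> 0" shows "Ck_on k S (\<lambda>x. c * g x) \<longleftrightarrow> Ck_on k S g"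
proof
  assume "Ck_on k S (\<lambda>x. c * g x)"
  from Ck_on_cmult[OF assms(1) this, of "inverse c"] show "Ck_on k S g"
    using assms(2) by (simp add: mult.assoc[symmetric])
qed (rule Ck_on_cmult[OF assms(1)])

lemma Ck_on_diff:
  assumes "open S" "Ck_on k S g" "Ck_on k S h" shows "Ck_on k S (\<lambda>x. g x - h x)"
  using Ck_on_add[OF assms(1,2) Ck_on_cmult[OF assms(1,3), of "-1"]] by simp

lemma Ck_on_inverse:
  assumes "open S" "Ck_on k S g" "\<And>x. x \<in> S \<Longrightarrow> g x \<noteq> 0"
  shows "Ck_on k S (\<lambda>x. inverse (g x))"
  using assms(2)
proof (induction k)
  case 0
  then show ?case using assms(3) continuous_on_inverse by auto
next
  case (Suc k)
  show ?case
  proof (rule Ck_on_SucI[OF assms(1)])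
    show "((\<lambda>x. inverse (g x)) has_real_derivative
        - deriv g x * (inverse (g x) * inverse (g x))) (at x)" if "x \<in> S" for x
      using DERIV_inverse_fun[OF Ck_on_imp_DERIV[OF Suc.prems that] assms(3)[OF that]]
      by (simp add: algebra_simps)
    show "Ck_on k S (\<lambda>x. - deriv g x * (inverse (g x) * inverse (g x)))"
      using Suc Ck_on_SucD Ck_on_cmult[OF assms(1), of k "deriv g" "-1"]
      by (intro Ck_on_mult[OF assms(1)]) auto
  qed
qed

lemma Ck_on_divide:
  assumes "open S" "Ck_on k S g" "Ck_on k S h" "\<And>x. x \<in> S \<Longrightarrow> h x \<noteq> 0"
  shows "Ck_on k S (\<lambda>x. g x / h x)"
  using Ck_on_mult[OF assms(1,2) Ck_on_inverse[OF assms(1,3,4)]] by (simp add: divide_inverse)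

lemma DERIV_compose_affine:
  fixes g :: "real \<Rightarrow> real"
  assumes "(g has_real_derivative D) (at (b + a * x))"
  shows "((\<lambda>x. g (b + a * x)) has_real_derivative D * a) (at x)"
proof -
  have "((\<lambda>x. b + a * x) has_real_derivative a) (at x)"
    by (auto intro!: derivative_eq_intros)
  from DERIV_chain2[OF assms this] show ?thesis .
qed

lemma Ck_on_compose_affine:
  assumes "open T" "Ck_on k S g" "\<And>x. x \<in> T \<Longrightarrow> b + a * x \<in> S"
  shows "Ck_on k T (\<lambda>x. g (b + a * x))"
  using assms(2)
proof (induction k arbitrary: g)
  case 0
  have "continuous_on T (\<lambda>x. b + a * x)" by (intro continuous_intros)
  with 0 show ?case using assms(3) by (auto intro: continuous_on_compose2)
next
  case (Suc k)
  show ?case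
  proof (rule Ck_on_SucI[OF assms(1)])
    show "((\<lambda>x. g (b + a * x)) has_real_derivative deriv g (b + a * x) * a) (at x)" if "x \<in> T" for x
      by (rule DERIV_compose_affine[OF Ck_on_imp_DERIV[OF Suc.prems assms(3)[OF that]]])
    show "Ck_on k T (\<lambda>x. deriv g (b + a * x) * a)"
      using Suc Ck_on_cmult[OF assms(1), of k _ a] by (simp add: mult.commute)
  qed
qed

lemma Ck_on_local:
  assumes "open S" "\<And>x. x \<in> S \<Longrightarrow> \<exists>V. open V \<and> x \<in> V \<and> V \<subseteq> S \<and> Ck_on k V g"
  shows "Ck_on k S g"
  using assms(2)
proof (induction k arbitrary: g)
  case 0
  have "isCont g x" if "x \<in> S" for x
    using 0[OF that] continuous_on_eq_continuous_at by auto
  then show ?case by (simp add: continuous_at_imp_continuous_on)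
next
  case (Suc k)
  have "\<exists>V. open V \<and> x \<in> V \<and> V \<subseteq> S \<and> Ck_on k V (deriv g)" if "x \<in> S" for x
    using Suc.prems[OF that] Ck_on.simps(2) by blast
  then have "Ck_on k S (deriv g)" by (rule Suc.IH)
  moreover have "g differentiable (at x)" if "x \<in> S" for x
    using Suc.prems[OF that] Ck_on.simps(2) by blast
  ultimately show ?case by simp
qed

lemma Ck_on_funpow_deriv: "Ck_on (n + k) S g \<Longrightarrow> Ck_on k S ((deriv ^^ n) g)"
  by (induction n arbitrary: g) (simp_all add: funpow_Suc_right del: funpow.simps)

lemma C_infinity_onI: "(\<And>k. Ck_on k S g) \<Longrightarrow> C_infinity_on S g"
  unfolding C_infinity_on_def using Ck_on_funpow_deriv[of _ 1 S g] by simp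

lemma Ck_on_integral:
  assumes "a < b" "continuous_on {a..b} g" "Ck_on k {a<..<b} g"
  shows "Ck_on (Suc k) {a<..<b} (\<lambda>x. integral {a..x} g)"
    and "\<And>x. x \<in> {a<..<b} \<Longrightarrow> ((\<lambda>x. integral {a..x} g) has_real_derivative g x) (at x)"
proof -
  show D: "((\<lambda>x. integral {a..x} g) has_real_derivative g x) (at x)" if "x \<in> {a<..<b}" for x
    using integral_has_real_derivative[OF assms(2), of x] that at_within_interior[of x "{a..b}"] by auto
  show "Ck_on (Suc k) {a<..<b} (\<lambda>x. integral {a..x} g)"
    by (rule Ck_on_SucI[OF _ D assms(3)]) auto
qed

lemma Ck_on_local_primitive:
  fixes g :: "real \<Rightarrow> real"
  assumes "Ck_on k S g" "0 < e" "cball m e \<subseteq> S"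
  obtains P where "Ck_on (Suc k) (ball m e) P" "\<And>z. z \<in> ball m e \<Longrightarrow> (P has_real_derivative g z) (at z)"
proof -
  have "continuous_on {m - e..m + e} g"
    using Ck_on_imp_continuous_on[OF assms(1)] assms(3)
    by (auto intro: continuous_on_subset simp: cball_eq_atLeastAtMost)
  moreover have "Ck_on k {m - e<..<m + e} g"
    using Ck_on_subset[OF assms(1)] assms(3) ball_subset_cball by (metis ball_eq_greaterThanLessThan order_trans)
  ultimately show thesis
    using Ck_on_integral[of "m - e" "m + e" g k] assms(2) that by (simp add: ball_eq_greaterThanLessThan)
qed

lemma DERIV_unique_on_open:
  fixes g h :: "real \<Rightarrow> real"
  assumes "open S" "x \<in> S" "\<And>y. y \<in> S \<Longrightarrow> g y = h y"
    and "(g has_real_derivative D) (at x)" "(h has_real_derivative E) (at x)"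
  shows "D = E"
proof -
  have "(h has_real_derivative D) (at x)"
    by (rule has_field_derivative_transform_within_open[OF assms(4,1,2)]) (use assms(3) in simp)
  with assms(5) show ?thesis using DERIV_unique by blast
qed

lemma filterlim_affine_at_left:
  fixes b c p :: real assumes "0 < c"
  shows "filterlim (\<lambda>y. b + c * y) (at_left (b + c * p)) (at_left p)"
proof (rule tendsto_imp_filterlim_at_left)
  show "((\<lambda>y. b + c * y) \<longlongrightarrow> b + c * p) (at_left p)" by (intro tendsto_intros)
  show "\<forall>\<^sub>F y in at_left p. b + c * y < b + c * p"
    using assms by (auto simp: eventually_at_filter)
qed

lemma filterlim_affine_at_right:
  fixes b c p :: real assumes "0 < c"
  shows "filterlim (\<lambda>y. b + c * y) (at_right (b + c * p)) (at_right p)"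
proof (rule tendsto_imp_filterlim_at_right)
  show "((\<lambda>y. b + c * y) \<longlongrightarrow> b + c * p) (at_right p)" by (intro tendsto_intros)
  show "\<forall>\<^sub>F y in at_right p. b + c * y > b + c * p"
    using assms by (auto simp: eventually_at_filter)
qed

lemma filterlim_affine_neg_at_right:
  fixes b c p :: real assumes "c < 0"
  shows "filterlim (\<lambda>y. b + c * y) (at_left (b + c * p)) (at_right p)"
proof (rule tendsto_imp_filterlim_at_left)
  show "((\<lambda>y. b + c * y) \<longlongrightarrow> b + c * p) (at_right p)" by (intro tendsto_intros)
  show "\<forall>\<^sub>F y in at_right p. b + c * y < b + c * p"
    using assms by (auto simp: eventually_at_filter mult_less_cancel_left_neg)
qed

lemma strict_mono_on_tendsto_at_left:
  fixes f :: "real \<Rightarrow> real"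
  assumes "strict_mono_on I f" "open I" "is_interval I" "p \<in> I"
  obtains L where "(f \<longlongrightarrow> L) (at_left p)" "\<And>z. z \<in> I \<Longrightarrow> z < p \<Longrightarrow> f z < L" "L \<le> f p"
proof -
  define L where "L = Sup (f ` ({..<p} \<inter> I))"
  have mono: "f a \<le> f b" if "a \<in> I" "b \<in> I" "a \<le> b" for a b
    using assms(1) that by (cases "a = b") (auto simp: monotone_on_def less_imp_le)
  have bdd: "bdd_above (f ` ({..<p} \<inter> I))"
    using mono assms(4) by (intro bdd_aboveI2[of _ _ "f p"]) auto
  obtain e where "0 < e" "ball p e \<subseteq> I" using assms(2,4) openE by blast
  then have "p - e / 2 \<in> {..<p} \<inter> I" by (auto simp: dist_real_def)
  then have "L \<le> f p"
    unfolding L_def using mono assms(4) by (intro cSup_least) fastforce+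
  moreover have "(f \<longlongrightarrow> L) (at_left p)"
  proof -
    have "(f \<longlongrightarrow> L) (at p within ({..<p} \<inter> I))"
      unfolding L_def by (rule Lim_left_bound[where K = "f p"]) (use mono assms(4) in auto)
    moreover have "at p within ({..<p} \<inter> I) = at_left p"
      by (rule at_within_nhd[of p I]) (use assms(2,4) in auto)
    ultimately show ?thesis by simp
  qed
  moreover have "f z < L" if "z \<in> I" "z < p" for z
  proof -
    have mid: "(z + p) / 2 \<in> {..<p} \<inter> I"
      using mem_is_interval_1_I[OF assms(3) that(1) assms(4), of "(z + p) / 2"] that(2) by simp
    then have "f z < f ((z + p) / 2)"
      using assms(1) that by (auto simp: monotone_on_def)
    also have "\<dots> \<le> L" unfolding L_def using mid bdd by (intro cSup_upper) auto
    finally show ?thesis .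
  qed
  ultimately show thesis using that by blast
qed

lemma strict_mono_on_tendsto_at_right:
  fixes f :: "real \<Rightarrow> real"
  assumes "strict_mono_on I f" "open I" "is_interval I" "p \<in> I"
  obtains R where "(f \<longlongrightarrow> R) (at_right p)" "\<And>z. z \<in> I \<Longrightarrow> p < z \<Longrightarrow> R < f z" "f p \<le> R"
proof -
  define R where "R = Inf (f ` ({p<..} \<inter> I))"
  have mono: "f a \<le> f b" if "a \<in> I" "b \<in> I" "a \<le> b" for a b
    using assms(1) that by (cases "a = b") (auto simp: monotone_on_def less_imp_le)
  have bdd: "bdd_below (f ` ({p<..} \<inter> I))"
    using mono assms(4) by (intro bdd_belowI2[of _ "f p"]) auto
  obtain e where "0 < e" "ball p e \<subseteq> I" using assms(2,4) openE by blast
  then have "p + e / 2 \<in> {p<..} \<inter> I" by (auto simp: dist_real_def)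
  then have "f p \<le> R"
    unfolding R_def using mono assms(4) by (intro cInf_greatest) fastforce+
  moreover have "(f \<longlongrightarrow> R) (at_right p)"
  proof -
    have "(f \<longlongrightarrow> R) (at p within ({p<..} \<inter> I))"
      unfolding R_def by (rule Lim_right_bound[where K = "f p"]) (use mono assms(4) in auto)
    moreover have "at p within ({p<..} \<inter> I) = at_right p"
      by (rule at_within_nhd[of p I]) (use assms(2,4) in auto)
    ultimately show ?thesis by simp
  qed
  moreover have "R < f z" if "z \<in> I" "p < z" for z
  proof -
    have mid: "(p + z) / 2 \<in> {p<..} \<inter> I"
      using mem_is_interval_1_I[OF assms(3) assms(4) that(1), of "(p + z) / 2"] that(2) by simp
    have "R \<le> f ((p + z) / 2)" unfolding R_def using mid bdd by (intro cInf_lower) auto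
    also have "\<dots> < f z"
      using assms(1) mid that by (auto simp: monotone_on_def)
    finally show ?thesis .
  qed
  ultimately show thesis using that by blast
qed

lemma strict_mono_on_isCont_if_one_sided_limits:
  fixes f :: "real \<Rightarrow> real"
  assumes "strict_mono_on I f" "open I" "is_interval I" "p \<in> I"
    and "(f \<longlongrightarrow> L) (at_left p)" "(f \<longlongrightarrow> L) (at_right p)"
  shows "isCont f p"
proof -
  obtain L' where "(f \<longlongrightarrow> L') (at_left p)" "L' \<le> f p"
    using strict_mono_on_tendsto_at_left[OF assms(1-4)] by metis
  moreover obtain R' where "(f \<longlongrightarrow> R') (at_right p)" "f p \<le> R'"
    using strict_mono_on_tendsto_at_right[OF assms(1-4)] by metis
  ultimately have "L = f p"
    using tendsto_unique[OF _ assms(5)] tendsto_unique[OF _ assms(6)] by force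
  with assms(5,6) show ?thesis unfolding isCont_def by (intro filterlim_split_at) simp_all
qed

lemma convex_comb_strictly_between:
  fixes t x y :: real
  assumes "0 < t" "t < 1" "x < y"
  shows "x < t * x + (1 - t) * y" "t * x + (1 - t) * y < y"
    and "x < t * y + (1 - t) * x" "t * y + (1 - t) * x < y"
proof -
  have "0 < (1 - t) * (y - x)" "0 < t * (y - x)" using assms by simp_all
  then show "x < t * x + (1 - t) * y" "t * x + (1 - t) * y < y"
    and "x < t * y + (1 - t) * x" "t * y + (1 - t) * x < y" by (simp_all add: algebra_simps)
qed

lemma strictly_monotone_increments_same_sign:
  fixes \<phi> :: "real \<Rightarrow> real"
  assumes "strict_mono_on I \<phi> \<or> strict_antimono_on I \<phi>" "x \<in> I" "z \<in> I" "y \<in> I" "x < z" "z < y"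
  shows "0 < (\<phi> z - \<phi> x) * (\<phi> y - \<phi> z)"
  using assms(1)
proof
  assume "strict_mono_on I \<phi>"
  then have "\<phi> x < \<phi> z" "\<phi> z < \<phi> y" using assms(2-) by (auto simp: monotone_on_def)
  then show ?thesis by simp
next
  assume "strict_antimono_on I \<phi>"
  then have "\<phi> z < \<phi> x" "\<phi> y < \<phi> z" using assms(2-) by (auto simp: monotone_on_def)
  then show ?thesis by (simp add: mult_neg_neg)
qed

lemma weighted_window_subset_ball:
  fixes t r m m0 :: real
  assumes "0 < t" "t < 1" "m \<in> ball m0 r"
  shows "{m - (1 - t) * r..m + t * r} \<subseteq> ball m0 (2 * r)"
proof
  fix z assume z: "z \<in> {m - (1 - t) * r..m + t * r}"
  have "m0 - r < m" "m < m0 + r" using assms(3) by (auto simp: dist_real_def)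
  moreover have "(1 - t) * r \<le> r" "t * r \<le> r"
    using assms(1,2) \<open>m0 - r < m\<close> \<open>m < m0 + r\<close> by (simp_all add: algebra_simps)
  ultimately show "z \<in> ball m0 (2 * r)"
    using z unfolding ball_eq_greaterThanLessThan atLeastAtMost_iff greaterThanLessThan_iff
    by (intro conjI; linarith)
qed

lemma shifted_points_in_window:
  fixes t r h m :: real
  assumes "0 < t" "t < 1" "h \<in> {0..r}"
  shows "m - (1 - t) * h \<in> {m - (1 - t) * r..m + t * r}" "m + t * h \<in> {m - (1 - t) * r..m + t * r}"
proof -
  have "(1 - t) * h \<le> (1 - t) * r" "t * h \<le> t * r" "0 \<le> (1 - t) * h" "0 \<le> t * h"
    using assms by (simp_all add: mult_left_mono)
  then show "m - (1 - t) * h \<in> {m - (1 - t) * r..m + t * r}" "m + t * h \<in> {m - (1 - t) * r..m + t * r}"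
    unfolding atLeastAtMost_iff by (intro conjI; linarith)+
qed

text \<open>For a primitive \<open>P\<close> of \<open>g\<close>, this is the integral
  \<open>\<integral>\<^sub>0\<^sup>r t g(m - (1 - t) h) + (1 - t) g(m + t h) dh\<close>.\<close>
definition weighted_increment :: "real \<Rightarrow> real \<Rightarrow> (real \<Rightarrow> real) \<Rightarrow> real \<Rightarrow> real" where
  "weighted_increment t r P m =
     t / (1 - t) * (P m - P (m - (1 - t) * r)) + (1 - t) / t * (P (m + t * r) - P m)"

lemma has_integral_weighted_increment:
  fixes P g :: "real \<Rightarrow> real"
  assumes "0 < t" "t < 1" "0 \<le> r"
    and "\<And>z. z \<in> {m - (1 - t) * r..m + t * r} \<Longrightarrow> (P has_real_derivative g z) (at z)"
  shows "((\<lambda>h. t * g (m - (1 - t) * h) + (1 - t) * g (m + t * h)) has_integral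
           weighted_increment t r P m) {0..r}"
proof -
  define Q where "Q h = (1 - t) / t * P (m + t * h) - t / (1 - t) * P (m + (t - 1) * h)" for h
  have "((\<lambda>h. t * g (m - (1 - t) * h) + (1 - t) * g (m + t * h)) has_integral Q r - Q 0) {0..r}"
  proof (rule fundamental_theorem_of_calculus[OF assms(3)])
    fix h assume h: "h \<in> {0..r}"
    have "m + (t - 1) * h = m - (1 - t) * h" by (simp add: algebra_simps)
    then have in_window:
      "m + (t - 1) * h \<in> {m - (1 - t) * r..m + t * r}" "m + t * h \<in> {m - (1 - t) * r..m + t * r}"
      using shifted_points_in_window[OF assms(1,2) h] by simp_all
    have "(Q has_real_derivative
        (1 - t) / t * (g (m + t * h) * t) - t / (1 - t) * (g (m + (t - 1) * h) * (t - 1))) (at h)"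
      unfolding Q_def
      by (intro DERIV_diff DERIV_cmult DERIV_compose_affine assms(4) in_window)
    moreover have "(1 - t) / t * (g (m + t * h) * t) - t / (1 - t) * (g (m + (t - 1) * h) * (t - 1))
        = t * g (m - (1 - t) * h) + (1 - t) * g (m + t * h)"
      using assms(1,2) by (simp add: field_simps)
    ultimately show "(Q has_vector_derivative t * g (m - (1 - t) * h) + (1 - t) * g (m + t * h))
        (at h within {0..r})"
      by (simp add: has_real_derivative_iff_has_vector_derivative[symmetric] has_field_derivative_at_within)
  qed
  moreover have "Q r - Q 0 = weighted_increment t r P m"
    unfolding Q_def weighted_increment_def by (simp add: algebra_simps)
  ultimately show ?thesis by simp
qed

lemma weighted_increment_pos:
  fixes P g :: "real \<Rightarrow> real"
  assumes "0 < t" "t < 1" "0 < r"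
    and "\<And>z. z \<in> {m - (1 - t) * r..m + t * r} \<Longrightarrow> (P has_real_derivative g z) (at z) \<and> 0 < g z"
  shows "0 < weighted_increment t r P m"
proof -
  have increasing: "P x < P y"
    if "x \<in> {m - (1 - t) * r..m + t * r}" "y \<in> {m - (1 - t) * r..m + t * r}" "x < y" for x y
  proof (rule DERIV_pos_imp_increasing[OF \<open>x < y\<close>])
    fix z assume "x \<le> z" "z \<le> y"
    then have "z \<in> {m - (1 - t) * r..m + t * r}" using that by auto
    then show "\<exists>D. (P has_real_derivative D) (at z) \<and> 0 < D" using assms(4) by blast
  qed
  have "0 < (1 - t) * r" "0 < t * r" using assms(1-3) by simp_all
  then have "P (m - (1 - t) * r) < P m" "P m < P (m + t * r)"
    by (auto intro!: increasing)
  then show ?thesis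
    unfolding weighted_increment_def using assms(1,2) by (intro add_pos_pos mult_pos_pos) auto
qed

lemma Ck_on_weighted_increment:
  assumes "open V" "Ck_on k S P" "\<And>m. m \<in> V \<Longrightarrow> {m - (1 - t) * r..m + t * r} \<subseteq> S" "0 < t" "t < 1" "0 \<le> r"
  shows "Ck_on k V (weighted_increment t r P)"
proof -
  have "0 \<le> (1 - t) * r" "0 \<le> t * r" using assms(4-) by simp_all
  then have in_S: "m - (1 - t) * r \<in> S" "m \<in> S" "m + t * r \<in> S" if "m \<in> V" for m
    using assms(3)[OF that] by auto
  have shift: "Ck_on k V (\<lambda>m. P (c + 1 * m))" if "\<And>m. m \<in> V \<Longrightarrow> m + c \<in> S" for c
    by (rule Ck_on_compose_affine[OF assms(1,2)]) (use that in \<open>simp add: add.commute\<close>)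
  have "Ck_on k V (\<lambda>m. t / (1 - t) * (P m - P (m - (1 - t) * r)) + (1 - t) / t * (P (m + t * r) - P m))"
    using shift[of 0] shift[of "- (1 - t) * r"] shift[of "t * r"] in_S
    by (intro Ck_on_add Ck_on_cmult Ck_on_diff assms(1)) (simp_all add: algebra_simps)
  then show ?thesis unfolding weighted_increment_def[abs_def] .
qed

locale weighted_mean_eq =
  fixes I :: "real set" and \<phi> f :: "real \<Rightarrow> real" and t :: real
  assumes open_I: "open I" and interval_I: "is_interval I" and nonempty_I: "I \<noteq> {}"
    and strictly_monotone: "strict_mono_on I \<phi> \<or> strict_antimono_on I \<phi>"
    and t_pos: "0 < t" and t_less_1: "t < 1"
    and eq: "\<And>x y. x \<in> I \<Longrightarrow> y \<in> I \<Longrightarrow>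
      (t * f x + (1 - t) * f y) * \<phi> (t * x + (1 - t) * y) = t * f x * \<phi> x + (1 - t) * f y * \<phi> y"
begin

lemma convex_comb_in_I: "x \<in> I \<Longrightarrow> y \<in> I \<Longrightarrow> t * x + (1 - t) * y \<in> I"
  using convexD[OF is_interval_convex[OF interval_I], of x y t "1 - t"] t_pos t_less_1 by simp

lemma eq_increments:
  "x \<in> I \<Longrightarrow> y \<in> I \<Longrightarrow>
    t * f x * (\<phi> (t * x + (1 - t) * y) - \<phi> x) = (1 - t) * f y * (\<phi> y - \<phi> (t * x + (1 - t) * y))"
  using eq[of x y] by (simp add: algebra_simps)

lemma increments_same_sign:
  assumes "x \<in> I" "y \<in> I" "x \<noteq> y"
  shows "0 < (\<phi> (t * x + (1 - t) * y) - \<phi> x) * (\<phi> y - \<phi> (t * x + (1 - t) * y))"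
proof (cases "x < y")
  case True
  then show ?thesis
    using convex_comb_strictly_between(1,2)[OF t_pos t_less_1 True]
    by (intro strictly_monotone_increments_same_sign[OF strictly_monotone assms(1)
          convex_comb_in_I[OF assms(1,2)] assms(2)])
next
  case False
  then have "y < x" using assms(3) by simp
  then have "0 < (\<phi> (t * x + (1 - t) * y) - \<phi> y) * (\<phi> x - \<phi> (t * x + (1 - t) * y))"
    using convex_comb_strictly_between(3,4)[OF t_pos t_less_1 \<open>y < x\<close>]
    by (intro strictly_monotone_increments_same_sign[OF strictly_monotone assms(2)
          convex_comb_in_I[OF assms(1,2)] assms(1)])
  then show ?thesis by (metis minus_diff_eq minus_mult_minus mult.commute)
qed

lemma vanishes_everywhere:
  assumes "x0 \<in> I" "f x0 = 0" "y \<in> I"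
  shows "f y = 0"
proof (cases "y = x0")
  case False
  have "(1 - t) * f y * (\<phi> y - \<phi> (t * x0 + (1 - t) * y)) = 0"
    using eq_increments[OF assms(1,3)] assms(2) by simp
  moreover have "\<phi> y - \<phi> (t * x0 + (1 - t) * y) \<noteq> 0"
    using increments_same_sign[OF assms(1,3)] False by force
  ultimately show ?thesis using t_less_1 by simp
qed (use assms in simp)

lemma nonvanishing_same_sign:
  assumes "\<forall>x\<in>I. f x \<noteq> 0" "x \<in> I" "y \<in> I"
  shows "0 < f x * f y"
proof (cases "x = y")
  case True
  then show ?thesis using assms by (auto simp: zero_less_mult_iff linorder_neq_iff)
next
  case False
  define A B where "A = \<phi> (t * x + (1 - t) * y) - \<phi> x" and "B = \<phi> y - \<phi> (t * x + (1 - t) * y)"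
  have "0 < A * B" unfolding A_def B_def using increments_same_sign[OF assms(2,3) False] .
  have "t * (A * B) * (f x * f y) = (t * f x * A) * (f y * B)" by (simp add: algebra_simps)
  also have "t * f x * A = (1 - t) * f y * B"
    unfolding A_def B_def using eq_increments[OF assms(2,3)] .
  also have "(1 - t) * f y * B * (f y * B) = (1 - t) * (f y * B)^2"
    by (simp add: power2_eq_square)
  moreover have "0 < (1 - t) * (f y * B)^2"
  proof -
    have "B \<noteq> 0" "f y \<noteq> 0" using \<open>0 < A * B\<close> assms(1,3) by auto
    then show ?thesis using t_less_1 by simp
  qed
  ultimately have "0 < t * (A * B) * (f x * f y)" by simp
  moreover have "0 < t * (A * B)" using \<open>0 < A * B\<close> t_pos by simp
  ultimately show ?thesis using zero_less_mult_pos by blast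
qed

text \<open>Integrating the equation over the pairs \<open>x = m - (1 - t) h\<close>, \<open>y = m + t h\<close>, \<open>0 \<le> h \<le> r\<close>,
  all with \<open>t x + (1 - t) y = m\<close>.\<close>
lemma phi_times_weighted_increment:
  assumes "0 \<le> r" "{m - (1 - t) * r..m + t * r} \<subseteq> I"
    and P: "\<And>z. z \<in> {m - (1 - t) * r..m + t * r} \<Longrightarrow> (P has_real_derivative f z) (at z)"
    and Q: "\<And>z. z \<in> {m - (1 - t) * r..m + t * r} \<Longrightarrow> (Q has_real_derivative f z * \<phi> z) (at z)"
  shows "\<phi> m * weighted_increment t r P m = weighted_increment t r Q m"
proof -
  have "((\<lambda>h. \<phi> m * (t * f (m - (1 - t) * h) + (1 - t) * f (m + t * h)))
      has_integral \<phi> m * weighted_increment t r P m) {0..r}"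
    by (intro has_integral_mult_right has_integral_weighted_increment[OF t_pos t_less_1 assms(1) P])
  moreover have "\<phi> m * (t * f (m - (1 - t) * h) + (1 - t) * f (m + t * h))
      = t * (f (m - (1 - t) * h) * \<phi> (m - (1 - t) * h)) + (1 - t) * (f (m + t * h) * \<phi> (m + t * h))"
    if "h \<in> {0..r}" for h
  proof -
    have "m - (1 - t) * h \<in> I" "m + t * h \<in> I"
      using shifted_points_in_window[OF t_pos t_less_1 that, of m] assms(2) by blast+
    moreover have "t * (m - (1 - t) * h) + (1 - t) * (m + t * h) = m" by (simp add: algebra_simps)
    ultimately show ?thesis using eq[of "m - (1 - t) * h" "m + t * h"] by (simp add: algebra_simps)
  qed
  ultimately have "((\<lambda>h. t * (f (m - (1 - t) * h) * \<phi> (m - (1 - t) * h))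
      + (1 - t) * (f (m + t * h) * \<phi> (m + t * h))) has_integral \<phi> m * weighted_increment t r P m) {0..r}"
    by (rule has_integral_eq[rotated])
  moreover have "((\<lambda>h. t * (f (m - (1 - t) * h) * \<phi> (m - (1 - t) * h))
      + (1 - t) * (f (m + t * h) * \<phi> (m + t * h))) has_integral weighted_increment t r Q m) {0..r}"
    by (rule has_integral_weighted_increment[OF t_pos t_less_1 assms(1) Q])
  ultimately show ?thesis by (rule has_integral_unique)
qed

end

locale normalized_weighted_mean_eq = weighted_mean_eq I \<phi> F t for I \<phi> F t +
  assumes F_pos: "\<And>x. x \<in> I \<Longrightarrow> 0 < F x"
    and phi_strict_mono: "strict_mono_on I \<phi>"
begin

lemma phi_less: "x \<in> I \<Longrightarrow> y \<in> I \<Longrightarrow> x < y \<Longrightarrow> \<phi> x < \<phi> y"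
  using phi_strict_mono by (auto simp: monotone_on_def)

lemma phi_weighted_mean:
  assumes "x \<in> I" "y \<in> I"
  shows "\<phi> (t * x + (1 - t) * y) = (t * F x * \<phi> x + (1 - t) * F y * \<phi> y) / (t * F x + (1 - t) * F y)"
proof -
  have "0 < t * F x + (1 - t) * F y"
    using F_pos assms t_pos t_less_1 by (intro add_pos_pos mult_pos_pos) auto
  then show ?thesis using eq[OF assms] by (simp add: eq_divide_eq mult.commute)
qed

lemma F_eq_quotient:
  assumes "x \<in> I" "y \<in> I" "x < y"
  shows "F y = t * F x * (\<phi> (t * x + (1 - t) * y) - \<phi> x) / ((1 - t) * (\<phi> y - \<phi> (t * x + (1 - t) * y)))"
proof -
  have "\<phi> (t * x + (1 - t) * y) < \<phi> y"
    using convex_comb_strictly_between(2)[OF t_pos t_less_1 assms(3)] convex_comb_in_I assms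
    by (intro phi_less) auto
  then have "(1 - t) * (\<phi> y - \<phi> (t * x + (1 - t) * y)) \<noteq> 0" using t_less_1 by simp
  with eq_increments[OF assms(1,2)] show ?thesis by (simp add: eq_divide_eq mult_ac)
qed

text \<open>By the quotient formula, \<open>F\<close> inherits one-sided limits from the monotone \<open>\<phi>\<close>;
  strict monotonicity makes the limit positive.\<close>
lemma tendsto_F_at_left:
  assumes "p \<in> I"
  obtains l where "0 < l" "(F \<longlongrightarrow> l) (at_left p)"
proof -
  obtain e where "0 < e" "ball p e \<subseteq> I" using openE[OF open_I assms] by blast
  define x where "x = p - e / 2"
  have "x \<in> ball p e" using \<open>0 < e\<close> by (simp add: x_def dist_real_def)
  then have x: "x \<in> I" "x < p" using \<open>ball p e \<subseteq> I\<close> \<open>0 < e\<close> by (auto simp: x_def)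
  define q where "q = t * x + (1 - t) * p"
  have q: "x < q" "q < p" "q \<in> I"
    using convex_comb_strictly_between(1,2)[OF t_pos t_less_1 x(2)] convex_comb_in_I[OF x(1) assms]
    by (simp_all add: q_def)
  obtain \<phi>q where \<phi>q: "(\<phi> \<longlongrightarrow> \<phi>q) (at_left q)" "\<phi> x < \<phi>q" "\<phi>q \<le> \<phi> q"
    using strict_mono_on_tendsto_at_left[OF phi_strict_mono open_I interval_I q(3)] x(1) q(1) by metis
  obtain \<phi>p where \<phi>p: "(\<phi> \<longlongrightarrow> \<phi>p) (at_left p)" "\<phi> q < \<phi>p"
    using strict_mono_on_tendsto_at_left[OF phi_strict_mono open_I interval_I assms] q(2,3) by metis
  define l where "l = t * F x * (\<phi>q - \<phi> x) / ((1 - t) * (\<phi>p - \<phi>q))"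
  have "0 < l"
    unfolding l_def using F_pos[OF x(1)] t_pos t_less_1 \<phi>q(2,3) \<phi>p(2)
    by (intro divide_pos_pos mult_pos_pos) auto
  have "filterlim (\<lambda>y. t * x + (1 - t) * y) (at_left q) (at_left p)"
    using filterlim_affine_at_left[of "1 - t" "t * x" p] t_less_1 by (simp add: q_def)
  from filterlim_compose[OF \<phi>q(1) this]
  have m_lim: "((\<lambda>y. \<phi> (t * x + (1 - t) * y)) \<longlongrightarrow> \<phi>q) (at_left p)" .
  have "((\<lambda>y. t * F x * (\<phi> (t * x + (1 - t) * y) - \<phi> x) / ((1 - t) * (\<phi> y - \<phi> (t * x + (1 - t) * y))))
      \<longlongrightarrow> l) (at_left p)"
    unfolding l_def using t_less_1 \<phi>q(3) \<phi>p(2)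
    by (intro tendsto_intros m_lim \<phi>p(1)) auto
  moreover have "\<forall>\<^sub>F y in at_left p.
      t * F x * (\<phi> (t * x + (1 - t) * y) - \<phi> x) / ((1 - t) * (\<phi> y - \<phi> (t * x + (1 - t) * y))) = F y"
    using eventually_at_left_real[OF x(2)]
  proof eventually_elim
    case (elim y)
    then have "y \<in> I" using mem_is_interval_1_I[OF interval_I x(1) assms, of y] by simp
    with elim show ?case using F_eq_quotient[OF x(1)] by simp
  qed
  ultimately have "(F \<longlongrightarrow> l) (at_left p)" by (rule Lim_transform_eventually)
  with \<open>0 < l\<close> show thesis using that by blast
qed

lemma reflected: "normalized_weighted_mean_eq (uminus ` I) (\<lambda>x. - \<phi> (- x)) (\<lambda>x. F (- x)) t"
proof unfold_locales
  show "open (uminus ` I)" using open_negations[OF open_I] by simp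
  show "is_interval (uminus ` I)" using interval_I by simp
  show "uminus ` I \<noteq> {}" using nonempty_I by simp
  show "strict_mono_on (uminus ` I) (\<lambda>x. - \<phi> (- x))"
    using phi_strict_mono by (auto simp: monotone_on_def)
  then show "strict_mono_on (uminus ` I) (\<lambda>x. - \<phi> (- x)) \<or> strict_antimono_on (uminus ` I) (\<lambda>x. - \<phi> (- x))" ..
  show "0 < F (- x)" if "x \<in> uminus ` I" for x using F_pos that by auto
  show "(t * F (- x) + (1 - t) * F (- y)) * - \<phi> (- (t * x + (1 - t) * y))
      = t * F (- x) * - \<phi> (- x) + (1 - t) * F (- y) * - \<phi> (- y)"
    if "x \<in> uminus ` I" "y \<in> uminus ` I" for x y
  proof -
    have "- x \<in> I" "- y \<in> I" using that by auto
    moreover have "- (t * x + (1 - t) * y) = t * - x + (1 - t) * - y" by (simp add: algebra_simps)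
    ultimately show ?thesis using eq[of "- x" "- y"] by simp
  qed
qed (use t_pos t_less_1 in auto)

lemma tendsto_F_at_right:
  assumes "p \<in> I"
  obtains l where "0 < l" "(F \<longlongrightarrow> l) (at_right p)"
proof -
  interpret reflected: normalized_weighted_mean_eq "uminus ` I" "\<lambda>x. - \<phi> (- x)" "\<lambda>x. F (- x)" t
    by (rule reflected)
  obtain l where "0 < l" "((\<lambda>x. F (- x)) \<longlongrightarrow> l) (at_left (- p))"
    using reflected.tendsto_F_at_left[of "- p"] assms by auto
  then show thesis using that filterlim_at_left_to_right[of "\<lambda>x. F (- x)" _ "- p"] by simp
qed

lemma tendsto_phi_along_path:
  assumes "x0 \<in> I" "y0 \<in> I" "0 < u" "0 < v"
    and \<phi>x: "(\<phi> \<longlongrightarrow> \<phi>x) (at_left x0)" and Fx: "(F \<longlongrightarrow> Fx) (at_left x0)" "0 < Fx"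
    and \<phi>y: "(\<phi> \<longlongrightarrow> \<phi>y) (at_right y0)" and Fy: "(F \<longlongrightarrow> Fy) (at_right y0)" "0 < Fy"
  shows "((\<lambda>a. \<phi> (t * (x0 - u * a) + (1 - t) * (y0 + v * a)))
    \<longlongrightarrow> (t * Fx * \<phi>x + (1 - t) * Fy * \<phi>y) / (t * Fx + (1 - t) * Fy)) (at_right 0)"
proof -
  have X: "filterlim (\<lambda>a. x0 - u * a) (at_left x0) (at_right 0)"
    using filterlim_affine_neg_at_right[of "- u" x0 0] assms(3) by simp
  have Y: "filterlim (\<lambda>a. y0 + v * a) (at_right y0) (at_right 0)"
    using filterlim_affine_at_right[of v y0 0] assms(4) by simp
  have "\<forall>\<^sub>F a in at_right 0. x0 - u * a \<in> I"
    by (rule topological_tendstoD[OF _ open_I assms(1)]) (auto intro!: tendsto_eq_intros)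
  moreover have "\<forall>\<^sub>F a in at_right 0. y0 + v * a \<in> I"
    by (rule topological_tendstoD[OF _ open_I assms(2)]) (auto intro!: tendsto_eq_intros)
  ultimately have "\<forall>\<^sub>F a in at_right 0. x0 - u * a \<in> I \<and> y0 + v * a \<in> I"
    by (rule eventually_conj)
  then have "\<forall>\<^sub>F a in at_right 0.
      (t * F (x0 - u * a) * \<phi> (x0 - u * a) + (1 - t) * F (y0 + v * a) * \<phi> (y0 + v * a)) /
      (t * F (x0 - u * a) + (1 - t) * F (y0 + v * a)) = \<phi> (t * (x0 - u * a) + (1 - t) * (y0 + v * a))"
    by eventually_elim (simp add: phi_weighted_mean)
  moreover have "0 < t * Fx + (1 - t) * Fy"
    using Fx(2) Fy(2) t_pos t_less_1 by (intro add_pos_pos mult_pos_pos) auto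
  then have "((\<lambda>a. (t * F (x0 - u * a) * \<phi> (x0 - u * a) + (1 - t) * F (y0 + v * a) * \<phi> (y0 + v * a)) /
      (t * F (x0 - u * a) + (1 - t) * F (y0 + v * a)))
      \<longlongrightarrow> (t * Fx * \<phi>x + (1 - t) * Fy * \<phi>y) / (t * Fx + (1 - t) * Fy)) (at_right 0)"
    by (intro tendsto_intros filterlim_compose[OF \<phi>x X] filterlim_compose[OF Fx(1) X]
        filterlim_compose[OF \<phi>y Y] filterlim_compose[OF Fy(1) Y]) simp
  ultimately show ?thesis by (rule Lim_transform_eventually[rotated])
qed

text \<open>Choosing \<open>m = t x\<^sub>0 + (1 - t) y\<^sub>0\<close> and two pairs of slopes, the mid point approaches
  \<open>m\<close> once from the right and once from the left, with the same limit.\<close>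
lemma isCont_phi:
  assumes "m \<in> I"
  shows "isCont \<phi> m"
proof -
  obtain e where "0 < e" "ball m e \<subseteq> I" using openE[OF open_I assms] by blast
  define x0 y0 where "x0 = m - (1 - t) * e / 2" and "y0 = m + t * e / 2"
  have "(1 - t) * e < e" "t * e < e" "0 < (1 - t) * e" "0 < t * e"
    using \<open>0 < e\<close> t_pos t_less_1 by (simp_all add: algebra_simps)
  then have "x0 \<in> ball m e" "y0 \<in> ball m e" using t_less_1 by (simp_all add: x0_def y0_def dist_real_def)
  then have "x0 \<in> I" "y0 \<in> I" using \<open>ball m e \<subseteq> I\<close> by auto
  obtain \<phi>x where \<phi>x: "(\<phi> \<longlongrightarrow> \<phi>x) (at_left x0)"
    using strict_mono_on_tendsto_at_left[OF phi_strict_mono open_I interval_I \<open>x0 \<in> I\<close>] by metis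
  obtain \<phi>y where \<phi>y: "(\<phi> \<longlongrightarrow> \<phi>y) (at_right y0)"
    using strict_mono_on_tendsto_at_right[OF phi_strict_mono open_I interval_I \<open>y0 \<in> I\<close>] by metis
  obtain Fx where Fx: "0 < Fx" "(F \<longlongrightarrow> Fx) (at_left x0)" using tendsto_F_at_left[OF \<open>x0 \<in> I\<close>] by metis
  obtain Fy where Fy: "0 < Fy" "(F \<longlongrightarrow> Fy) (at_right y0)" using tendsto_F_at_right[OF \<open>y0 \<in> I\<close>] by metis
  define V where "V = (t * Fx * \<phi>x + (1 - t) * Fy * \<phi>y) / (t * Fx + (1 - t) * Fy)"
  have path: "((\<lambda>a. \<phi> (t * (x0 - u * a) + (1 - t) * (y0 + v * a))) \<longlongrightarrow> V) (at_right 0)"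
    if "0 < u" "0 < v" for u v
    unfolding V_def by (rule tendsto_phi_along_path[OF \<open>x0 \<in> I\<close> \<open>y0 \<in> I\<close> that \<phi>x Fx(2,1) \<phi>y Fy(2,1)])
  have "t * (x0 - 1 / t * a) + (1 - t) * (y0 + 2 / (1 - t) * a) = m + a" for a
    unfolding x0_def y0_def using t_pos t_less_1 by (simp add: field_simps)
  then have "((\<lambda>a. \<phi> (m + a)) \<longlongrightarrow> V) (at_right 0)"
    using path[of "1 / t" "2 / (1 - t)"] t_pos t_less_1 by simp
  then have right: "(\<phi> \<longlongrightarrow> V) (at_right m)"
    by (simp add: filterlim_at_right_to_0[of \<phi> _ m] add.commute)
  have "t * (x0 - 2 / t * a) + (1 - t) * (y0 + 1 / (1 - t) * a) = m - a" for a
    unfolding x0_def y0_def using t_pos t_less_1 by (simp add: field_simps)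
  then have "((\<lambda>a. \<phi> (m - a)) \<longlongrightarrow> V) (at_right 0)"
    using path[of "2 / t" "1 / (1 - t)"] t_pos t_less_1 by simp
  then have left: "(\<phi> \<longlongrightarrow> V) (at_left m)"
    by (simp add: filterlim_at_left_to_right filterlim_at_right_to_0[of _ _ "- m"])
  from left right show ?thesis
    by (rule strict_mono_on_isCont_if_one_sided_limits[OF phi_strict_mono open_I interval_I assms])
qed

lemma Ck_on_F_if_Ck_on_phi:
  assumes "Ck_on k I \<phi>"
  shows "Ck_on k I F"
proof (rule Ck_on_local[OF open_I])
  fix y0 assume "y0 \<in> I"
  obtain e where "0 < e" "ball y0 e \<subseteq> I" using openE[OF open_I \<open>y0 \<in> I\<close>] by blast
  define x where "x = y0 - e / 2"
  have "x \<in> ball y0 e" using \<open>0 < e\<close> by (simp add: x_def dist_real_def)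
  then have x: "x \<in> I" "x < y0" using \<open>ball y0 e \<subseteq> I\<close> \<open>0 < e\<close> by (auto simp: x_def)
  define V where "V = I \<inter> {x<..}"
  have V: "open V" "y0 \<in> V" "V \<subseteq> I" using open_I x \<open>y0 \<in> I\<close> by (auto simp: V_def)
  have m_in_I: "t * x + (1 - t) * y \<in> I" if "y \<in> V" for y
    using convex_comb_in_I[OF x(1)] that V(3) by blast
  have \<phi>m: "Ck_on k V (\<lambda>y. \<phi> (t * x + (1 - t) * y))"
    by (rule Ck_on_compose_affine[OF V(1) assms m_in_I])
  have "Ck_on k V
      (\<lambda>y. t * F x * (\<phi> (t * x + (1 - t) * y) - \<phi> x) / ((1 - t) * (\<phi> y - \<phi> (t * x + (1 - t) * y))))"
  proof (rule Ck_on_divide[OF V(1)])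
    show "Ck_on k V (\<lambda>y. t * F x * (\<phi> (t * x + (1 - t) * y) - \<phi> x))"
      by (intro Ck_on_cmult[OF V(1)] Ck_on_diff[OF V(1)] \<phi>m Ck_on_const)
    show "Ck_on k V (\<lambda>y. (1 - t) * (\<phi> y - \<phi> (t * x + (1 - t) * y)))"
      by (intro Ck_on_cmult[OF V(1)] Ck_on_diff[OF V(1)] \<phi>m Ck_on_subset[OF assms V(3)])
    show "(1 - t) * (\<phi> y - \<phi> (t * x + (1 - t) * y)) \<noteq> 0" if "y \<in> V" for y
    proof -
      have "x < y" "y \<in> I" using that by (auto simp: V_def)
      then have "\<phi> (t * x + (1 - t) * y) < \<phi> y"
        using convex_comb_strictly_between(2)[OF t_pos t_less_1] m_in_I[OF that] by (intro phi_less) auto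
      then show ?thesis using t_less_1 by simp
    qed
  qed
  then have "Ck_on k V F"
    by (rule Ck_on_transform[OF V(1)]) (use F_eq_quotient[OF x(1)] in \<open>auto simp: V_def\<close>)
  with V show "\<exists>V. open V \<and> y0 \<in> V \<and> V \<subseteq> I \<and> Ck_on k V F" by blast
qed

text \<open>By \<open>phi_times_weighted_increment\<close>, \<open>\<phi>\<close> is locally a quotient of weighted increments of
  primitives, and primitives gain one degree of smoothness.\<close>
lemma Ck_on_Suc_phi:
  assumes "Ck_on k I F" "Ck_on k I \<phi>"
  shows "Ck_on (Suc k) I \<phi>"
proof (rule Ck_on_local[OF open_I])
  fix m0 assume "m0 \<in> I"
  obtain e where "0 < e" "cball m0 e \<subseteq> I" using open_contains_cball open_I \<open>m0 \<in> I\<close> by blast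
  define r where "r = e / 2"
  have "0 < r" "e = 2 * r" by (simp_all add: r_def \<open>0 < e\<close>)
  obtain Fp where Fp: "Ck_on (Suc k) (ball m0 e) Fp" "\<And>z. z \<in> ball m0 e \<Longrightarrow> (Fp has_real_derivative F z) (at z)"
    using Ck_on_local_primitive[OF assms(1) \<open>0 < e\<close> \<open>cball m0 e \<subseteq> I\<close>] by blast
  obtain Up where Up: "Ck_on (Suc k) (ball m0 e) Up"
    "\<And>z. z \<in> ball m0 e \<Longrightarrow> (Up has_real_derivative F z * \<phi> z) (at z)"
    using Ck_on_local_primitive[OF Ck_on_mult[OF open_I assms] \<open>0 < e\<close> \<open>cball m0 e \<subseteq> I\<close>] by blast
  have window: "{m - (1 - t) * r..m + t * r} \<subseteq> ball m0 e" if "m \<in> ball m0 r" for m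
    using weighted_window_subset_ball[OF t_pos t_less_1 that] \<open>e = 2 * r\<close> by simp
  have "ball m0 e \<subseteq> I" using \<open>cball m0 e \<subseteq> I\<close> by auto
  have pos: "0 < weighted_increment t r Fp m" if "m \<in> ball m0 r" for m
    using window[OF that] \<open>ball m0 e \<subseteq> I\<close> Fp(2) F_pos
    by (intro weighted_increment_pos[OF t_pos t_less_1 \<open>0 < r\<close>]) blast
  have quotient: "Ck_on (Suc k) (ball m0 r) (\<lambda>m. weighted_increment t r Up m / weighted_increment t r Fp m)"
  proof (rule Ck_on_divide)
    show "Ck_on (Suc k) (ball m0 r) (weighted_increment t r Up)"
      by (rule Ck_on_weighted_increment[OF _ Up(1) window]) (use \<open>0 < r\<close> t_pos t_less_1 in simp_all)
    show "Ck_on (Suc k) (ball m0 r) (weighted_increment t r Fp)"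
      by (rule Ck_on_weighted_increment[OF _ Fp(1) window]) (use \<open>0 < r\<close> t_pos t_less_1 in simp_all)
    show "weighted_increment t r Fp m \<noteq> 0" if "m \<in> ball m0 r" for m
      using pos[OF that] by simp
  qed simp
  have "Ck_on (Suc k) (ball m0 r) \<phi>"
  proof (rule Ck_on_transform[OF _ quotient])
    fix m assume m: "m \<in> ball m0 r"
    have "\<phi> m * weighted_increment t r Fp m = weighted_increment t r Up m"
      using window[OF m] \<open>ball m0 e \<subseteq> I\<close> \<open>0 < r\<close> Fp(2) Up(2)
      by (intro phi_times_weighted_increment) auto
    then show "weighted_increment t r Up m / weighted_increment t r Fp m = \<phi> m"
      using pos[OF m] by (simp add: field_simps)
  qed simp
  moreover have "ball m0 r \<subseteq> I"
    using \<open>ball m0 e \<subseteq> I\<close> \<open>e = 2 * r\<close> \<open>0 < r\<close> by auto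
  ultimately show "\<exists>V. open V \<and> m0 \<in> V \<and> V \<subseteq> I \<and> Ck_on (Suc k) V \<phi>"
    using \<open>0 < r\<close> by (intro exI[of _ "ball m0 r"]) simp
qed

lemma Ck_on_phi_F: "Ck_on k I \<phi> \<and> Ck_on k I F"
proof (induction k)
  case 0
  have "continuous_on I \<phi>" using isCont_phi by (simp add: continuous_at_imp_continuous_on)
  then show ?case using Ck_on_F_if_Ck_on_phi[of 0] by simp
next
  case (Suc k)
  then have "Ck_on (Suc k) I \<phi>" using Ck_on_Suc_phi by blast
  then show ?case using Ck_on_F_if_Ck_on_phi by blast
qed

end


context normalized_weighted_mean_eq
begin

lemma DERIV_phi_F:
  assumes "z \<in> I"
  shows "(\<phi> has_real_derivative deriv \<phi> z) (at z)" "(deriv \<phi> has_real_derivative deriv (deriv \<phi>) z) (at z)"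
    and "(F has_real_derivative deriv F z) (at z)" "(deriv F has_real_derivative deriv (deriv F) z) (at z)"
proof -
  have C2: "Ck_on (Suc (Suc 0)) I \<phi>" "Ck_on (Suc (Suc 0)) I F" using Ck_on_phi_F by blast+
  then have "Ck_on (Suc 0) I (deriv \<phi>)" "Ck_on (Suc 0) I (deriv F)"
    using Ck_on.simps(2)[of "Suc 0" I \<phi>] Ck_on.simps(2)[of "Suc 0" I F] by blast+
  with C2 show "(\<phi> has_real_derivative deriv \<phi> z) (at z)"
    "(deriv \<phi> has_real_derivative deriv (deriv \<phi>) z) (at z)"
    and "(F has_real_derivative deriv F z) (at z)" "(deriv F has_real_derivative deriv (deriv F) z) (at z)"
    using Ck_on_imp_DERIV assms by blast+
qed

lemma DERIV_eq_increments:
  assumes "x \<in> I" "y \<in> I"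
  shows "t * F x * (deriv \<phi> (t * x + (1 - t) * y) * (1 - t))
    = (1 - t) * (F y * (deriv \<phi> y - deriv \<phi> (t * x + (1 - t) * y) * (1 - t))
      + deriv F y * (\<phi> y - \<phi> (t * x + (1 - t) * y)))"
proof (rule DERIV_unique_on_open[OF open_I assms(2)])
  show "t * F x * (\<phi> (t * x + (1 - t) * z) - \<phi> x) = (1 - t) * (F z * (\<phi> z - \<phi> (t * x + (1 - t) * z)))"
    if "z \<in> I" for z
    using eq_increments[OF assms(1) that] by (simp add: mult.assoc)
  have "((\<lambda>z. \<phi> (t * x + (1 - t) * z)) has_real_derivative deriv \<phi> (t * x + (1 - t) * y) * (1 - t)) (at y)"
    using DERIV_compose_affine[OF DERIV_phi_F(1)[OF convex_comb_in_I[OF assms]]] .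
  then show "((\<lambda>z. t * F x * (\<phi> (t * x + (1 - t) * z) - \<phi> x)) has_real_derivative
      t * F x * (deriv \<phi> (t * x + (1 - t) * y) * (1 - t))) (at y)"
    and "((\<lambda>z. (1 - t) * (F z * (\<phi> z - \<phi> (t * x + (1 - t) * z)))) has_real_derivative
      (1 - t) * (F y * (deriv \<phi> y - deriv \<phi> (t * x + (1 - t) * y) * (1 - t))
      + deriv F y * (\<phi> y - \<phi> (t * x + (1 - t) * y)))) (at y)"
    using DERIV_phi_F[OF assms(2)] by (auto intro!: DERIV_cmult DERIV_mult' DERIV_diff[THEN DERIV_cong])
qed

text \<open>Differentiating \<open>DERIV_eq_increments\<close> once more in \<open>y\<close> at \<open>y = x\<close> yields \<open>-t (1 - t)\<close> times
  the left-hand side below.\<close>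
lemma F_phi_ode:
  assumes x: "x \<in> I"
  shows "2 * deriv F x * deriv \<phi> x + F x * deriv (deriv \<phi>) x = 0"
proof -
  define \<phi>1 \<phi>2 F1 F2 where "\<phi>1 = deriv \<phi>" and "\<phi>2 = deriv \<phi>1" and "F1 = deriv F" and "F2 = deriv F1"
  have d\<phi>: "(\<phi> has_real_derivative \<phi>1 z) (at z)" "(\<phi>1 has_real_derivative \<phi>2 z) (at z)"
    and dF: "(F has_real_derivative F1 z) (at z)" "(F1 has_real_derivative F2 z) (at z)" if "z \<in> I" for z
    using DERIV_phi_F[OF that] unfolding \<phi>1_def \<phi>2_def F1_def F2_def by blast+
  have d\<phi>m: "((\<lambda>y. \<phi> (t * x + (1 - t) * y)) has_real_derivative \<phi>1 (t * x + (1 - t) * x) * (1 - t)) (at x)"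
    "((\<lambda>y. \<phi>1 (t * x + (1 - t) * y)) has_real_derivative \<phi>2 (t * x + (1 - t) * x) * (1 - t)) (at x)"
    using DERIV_compose_affine[OF d\<phi>(1)] DERIV_compose_affine[OF d\<phi>(2)] convex_comb_in_I[OF x x] by blast+
  have "t * F x * (\<phi>2 (t * x + (1 - t) * x) * (1 - t) * (1 - t))
    = (1 - t) * ((F x * (\<phi>2 x - \<phi>2 (t * x + (1 - t) * x) * (1 - t) * (1 - t))
        + F1 x * (\<phi>1 x - \<phi>1 (t * x + (1 - t) * x) * (1 - t)))
      + (F1 x * (\<phi>1 x - \<phi>1 (t * x + (1 - t) * x) * (1 - t)) + F2 x * (\<phi> x - \<phi> (t * x + (1 - t) * x))))"
  proof (rule DERIV_unique_on_open[OF open_I x])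
    show "t * F x * (\<phi>1 (t * x + (1 - t) * y) * (1 - t)) = (1 - t) * (F y * (\<phi>1 y - \<phi>1 (t * x + (1 - t) * y) * (1 - t))
        + F1 y * (\<phi> y - \<phi> (t * x + (1 - t) * y)))" if "y \<in> I" for y
      using DERIV_eq_increments[OF x that] unfolding \<phi>1_def F1_def .
  qed (intro DERIV_cmult DERIV_cmult_right DERIV_add DERIV_diff DERIV_mult' d\<phi>m d\<phi> dF x)+
  moreover have "t * x + (1 - t) * x = x" by (simp add: algebra_simps)
  ultimately have "(1 - t) * t * (2 * F1 x * \<phi>1 x + F x * \<phi>2 x) = 0"
    by (simp add: algebra_simps)
  moreover have "(1 - t) * t \<noteq> 0" using t_pos t_less_1 by simp
  ultimately show ?thesis by (simp add: \<phi>1_def \<phi>2_def F1_def)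
qed

lemma deriv_phi_not_identically_zero: "\<exists>x\<in>I. deriv \<phi> x \<noteq> 0"
proof (rule ccontr)
  assume "\<not> (\<exists>x\<in>I. deriv \<phi> x \<noteq> 0)"
  then have "\<exists>c. \<forall>x\<in>I. \<phi> x = c"
    using DERIV_phi_F(1)
    by (intro has_field_derivative_zero_constant[OF is_interval_convex[OF interval_I]])
      (auto simp: has_field_derivative_at_within)
  moreover obtain p where "p \<in> I" using nonempty_I by blast
  moreover obtain e where "0 < e" "ball p e \<subseteq> I" using openE[OF open_I \<open>p \<in> I\<close>] by blast
  then have "p + e / 2 \<in> I" by (auto simp: dist_real_def)
  ultimately show False using phi_less[OF \<open>p \<in> I\<close> \<open>p + e / 2 \<in> I\<close>] \<open>0 < e\<close> by force
qed

lemma F_sq_deriv_phi_constant: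
  obtains \<gamma> where "\<gamma> \<noteq> 0" "\<And>x. x \<in> I \<Longrightarrow> (F x)\<^sup>2 * deriv \<phi> x = \<gamma>"
proof -
  have "\<exists>\<gamma>. \<forall>x\<in>I. F x * F x * deriv \<phi> x = \<gamma>"
  proof (rule has_field_derivative_zero_constant[OF is_interval_convex[OF interval_I]])
    fix x assume x: "x \<in> I"
    have "((\<lambda>x. F x * F x * deriv \<phi> x) has_real_derivative
        F x * F x * deriv (deriv \<phi>) x + (F x * deriv F x + deriv F x * F x) * deriv \<phi> x) (at x)"
      using DERIV_phi_F[OF x] by (intro DERIV_mult')
    moreover have "F x * F x * deriv (deriv \<phi>) x + (F x * deriv F x + deriv F x * F x) * deriv \<phi> x
        = F x * (2 * deriv F x * deriv \<phi> x + F x * deriv (deriv \<phi>) x)"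
      by (simp add: algebra_simps)
    ultimately show "((\<lambda>x. F x * F x * deriv \<phi> x) has_real_derivative 0) (at x within I)"
      using F_phi_ode[OF x] by (simp add: has_field_derivative_at_within)
  qed
  then obtain \<gamma> where \<gamma>: "\<And>x. x \<in> I \<Longrightarrow> (F x)\<^sup>2 * deriv \<phi> x = \<gamma>"
    by (auto simp: power2_eq_square)
  moreover have "\<gamma> \<noteq> 0"
    using deriv_phi_not_identically_zero \<gamma> F_pos by fastforce
  ultimately show thesis using that by blast
qed

end

context weighted_mean_eq
begin

lemma normalized_rescaling:
  assumes "\<forall>x\<in>I. f x \<noteq> 0"
  obtains \<sigma> \<tau> :: real where "\<sigma> \<in> {-1, 1}" "\<tau> \<in> {-1, 1}"
    "normalized_weighted_mean_eq I (\<lambda>x. \<tau> * \<phi> x) (\<lambda>x. \<sigma> * f x) t"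
proof -
  obtain p where "p \<in> I" using nonempty_I by blast
  define \<sigma> \<tau> :: real where "\<sigma> = sgn (f p)" and "\<tau> = (if strict_mono_on I \<phi> then 1 else -1)"
  have "\<sigma> \<in> {-1, 1}" "\<tau> \<in> {-1, 1}" using assms \<open>p \<in> I\<close> by (auto simp: \<sigma>_def \<tau>_def sgn_if)
  moreover have "normalized_weighted_mean_eq I (\<lambda>x. \<tau> * \<phi> x) (\<lambda>x. \<sigma> * f x) t"
  proof unfold_locales
    show "0 < \<sigma> * f x" if "x \<in> I" for x
      using nonvanishing_same_sign[OF assms that \<open>p \<in> I\<close>] by (auto simp: \<sigma>_def sgn_if zero_less_mult_iff)
    show "strict_mono_on I (\<lambda>x. \<tau> * \<phi> x)"
      using strictly_monotone by (auto simp: \<tau>_def monotone_on_def)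
    then show "strict_mono_on I (\<lambda>x. \<tau> * \<phi> x) \<or> strict_antimono_on I (\<lambda>x. \<tau> * \<phi> x)" ..
    show "(t * (\<sigma> * f x) + (1 - t) * (\<sigma> * f y)) * (\<tau> * \<phi> (t * x + (1 - t) * y))
        = t * (\<sigma> * f x) * (\<tau> * \<phi> x) + (1 - t) * (\<sigma> * f y) * (\<tau> * \<phi> y)"
      if "x \<in> I" "y \<in> I" for x y
      using arg_cong[OF eq[OF that], of "\<lambda>z. \<sigma> * \<tau> * z"] by (simp add: algebra_simps)
  qed (use open_I interval_I nonempty_I t_pos t_less_1 in auto)
  ultimately show thesis using that by blast
qed

lemma nonvanishing_smooth_conserved:
  assumes "\<forall>x\<in>I. f x \<noteq> 0"
  shows "C_infinity_on I f \<and> C_infinity_on I \<phi> \<and> (\<exists>\<gamma>. \<gamma> \<noteq> 0 \<and> (\<forall>x\<in>I. (f x)\<^sup>2 * deriv \<phi> x = \<gamma>))"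
proof -
  obtain \<sigma> \<tau> :: real where \<sigma>: "\<sigma> \<in> {-1, 1}" and \<tau>: "\<tau> \<in> {-1, 1}"
    and normalized: "normalized_weighted_mean_eq I (\<lambda>x. \<tau> * \<phi> x) (\<lambda>x. \<sigma> * f x) t"
    using normalized_rescaling[OF assms] by blast
  interpret N: normalized_weighted_mean_eq I "\<lambda>x. \<tau> * \<phi> x" "\<lambda>x. \<sigma> * f x" t
    by (rule normalized)
  have Ck: "Ck_on k I f" "Ck_on k I \<phi>" for k
    using N.Ck_on_phi_F[of k] Ck_on_cmult_iff[OF open_I, of \<sigma> k f] Ck_on_cmult_iff[OF open_I, of \<tau> k \<phi>] \<sigma> \<tau>
    by auto
  obtain \<gamma> where "\<gamma> \<noteq> 0" and \<gamma>: "\<And>x. x \<in> I \<Longrightarrow> (\<sigma> * f x)\<^sup>2 * deriv (\<lambda>x. \<tau> * \<phi> x) x = \<gamma>"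
    using N.F_sq_deriv_phi_constant by blast
  have "(f x)\<^sup>2 * deriv \<phi> x = \<tau> * \<gamma>" if "x \<in> I" for x
  proof -
    have "deriv (\<lambda>x. \<tau> * \<phi> x) x = \<tau> * deriv \<phi> x"
      using Ck_on_imp_DERIV[OF Ck(2)[of "Suc 0"] that] by (intro DERIV_imp_deriv DERIV_cmult) simp
    then show ?thesis using \<gamma>[OF that] \<sigma> \<tau> by (auto simp: power_mult_distrib)
  qed
  moreover have "\<tau> * \<gamma> \<noteq> 0" using \<tau> \<open>\<gamma> \<noteq> 0\<close> by auto
  moreover have "C_infinity_on I f" "C_infinity_on I \<phi>" using Ck by (auto intro: C_infinity_onI)
  ultimately show ?thesis by blast
qed

end

theorem theorem2p1:
  fixes I :: "real set" and \<phi> f :: "real \<Rightarrow> real" and t :: real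
  assumes "I \<noteq> {}" and "open I" and "is_interval I"
    and "strict_mono_on I \<phi> \<or> strict_antimono_on I \<phi>"
    and "0 < t" and "t < 1"
    and "\<And>x y. x \<in> I \<Longrightarrow> y \<in> I \<Longrightarrow>
      (t * f x + (1 - t) * f y) * \<phi> (t * x + (1 - t) * y)
        = t * f x * \<phi> x + (1 - t) * f y * \<phi> y"
  shows "(\<forall>x\<in>I. f x = 0) \<or>
    ((\<forall>x\<in>I. f x \<noteq> 0) \<and> C_infinity_on I f \<and> C_infinity_on I \<phi> \<and>
     (\<exists>\<gamma>::real. \<gamma> \<noteq> 0 \<and> (\<forall>x\<in>I. (f x)^2 * deriv \<phi> x = \<gamma>)))"
proof -
  interpret weighted_mean_eq I \<phi> f t
    by unfold_locales (fact assms)+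
  show ?thesis
  proof (cases "\<exists>x0\<in>I. f x0 = 0")
    case True
    then show ?thesis using vanishes_everywhere by blast
  next
    case False
    then show ?thesis using nonvanishing_smooth_conserved by blast
  qed
qed

end
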